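(* Let $\Omega$ be a finite nonempty set, $\mathcal{A}=2^\Omega$, let $\phi$ be a coevent on $\mathcal{A}$ and let $\mu$ be a $q$-measure on $\mathcal{A}$. If $\mu$ 1-generates $\phi$ and $\mu(\Omega)\neq 0$, then $\mu$ actualizes $\phi$.
   Context: Let $\Omega$ be a finite nonempty set and $\mathcal{A}=2^\Omega$. A coevent is a map $\phi:\mathcal{A}\to\{0,1\}$ with $\phi(\emptyset)=0$. For $f:\Omega\to[0,\infty)$ and a coevent $\phi$, the $q$-integral is $\int f\,d\phi=\int_0^\infty \phi(\{\omega\in\Omega: f(\omega)>\lambda\})\,d\lambda$ (Lebesgue measure in $\lambda$), and for $A\in\mathcal{A}$, $\int_A f\,d\phi=\int f\chi_A\,d\phi$ where $\chi_A$ is the indicator function of $A$. A $q$-measure is a map $\mu:\mathcal{A}\to[0,\infty)$ such that for all pairwise disjoint $A,B,C\in\mathcal{A}$: $\mu(A\cup B\cup C)=\mu(A\cup B)+\mu(A\cup C)+\mu(B\cup C)-\mu(A)-\mu(B)-\mu(C)$. The $q$-measure $\mu$ 1-generates $\phi$ if there is a function $f:\Omega\to(0,\infty)$ with $\mu(A)=\int_A f\,d\phi$ for all $A\in\mathcal{A}$. The $q$-measure $\mu$ actualizes $\phi$ if there is a symmetric function $f:\Omega\times\Omega\to(0,\infty)$ (i.e. $f(\omega,\omega')=f(\omega',\omega)$) such that for all $A\in\mathcal{A}$, $\mu(A)=\int g_A\,d\phi$, where $g_A:\Omega\to[0,\infty)$ is defined by $g_A(\omega')=\int_A f(\cdot,\omega')\,d\phi$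 (the $q$-integral over $A$ of $\omega\mapsto f(\omega,\omega')$). *)

theory Defs
  imports "HOL-Analysis.Analysis"
begin

text \<open>A coevent is a 0/1-valued map on events sending the empty set to 0; we represent it
  by a predicate phi on sets (phi A means phi(A) = 1).\<close>

definition coevent :: "'a set \<Rightarrow> ('a set \<Rightarrow> bool) \<Rightarrow> bool" where
  "coevent Om phi \<longleftrightarrow> \<not> phi {}"

definition q_integral :: "'a set \<Rightarrow> ('a set \<Rightarrow> bool) \<Rightarrow> ('a \<Rightarrow> real) \<Rightarrow> real" where
  "q_integral Om phi f =
     (LINT l:{0..}|lborel. (if phi {w \<in> Om. f w > l} then 1 else 0))"

definition q_integral_on :: "'a set \<Rightarrow> ('a set \<Rightarrow> bool) \<Rightarrow> 'a set \<Rightarrow> ('a \<Rightarrow> real) \<Rightarrow> real" where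
  "q_integral_on Om phi A f = q_integral Om phi (\<lambda>w. f w * indicator A w)"

definition q_measure :: "'a set \<Rightarrow> ('a set \<Rightarrow> real) \<Rightarrow> bool" where
  "q_measure Om mu \<longleftrightarrow>
     (\<forall>A \<in> Pow Om. mu A \<ge> 0) \<and>
     (\<forall>A B C. A \<subseteq> Om \<longrightarrow> B \<subseteq> Om \<longrightarrow> C \<subseteq> Om \<longrightarrow>
        A \<inter> B = {} \<longrightarrow> A \<inter> C = {} \<longrightarrow> B \<inter> C = {} \<longrightarrow>
        mu (A \<union> B \<union> C) = mu (A \<union> B) + mu (A \<union> C) + mu (B \<union> C) - mu A - mu B - mu C)"

definition one_generates :: "'a set \<Rightarrow> ('a set \<Rightarrow> real) \<Rightarrow> ('a set \<Rightarrow> bool) \<Rightarrow> bool" where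
  "one_generates Om mu phi \<longleftrightarrow>
     (\<exists>f :: 'a \<Rightarrow> real. (\<forall>w \<in> Om. f w > 0) \<and>
        (\<forall>A. A \<subseteq> Om \<longrightarrow> mu A = q_integral_on Om phi A f))"

definition actualizes :: "'a set \<Rightarrow> ('a set \<Rightarrow> real) \<Rightarrow> ('a set \<Rightarrow> bool) \<Rightarrow> bool" where
  "actualizes Om mu phi \<longleftrightarrow>
     (\<exists>f :: 'a \<Rightarrow> 'a \<Rightarrow> real.
        (\<forall>w \<in> Om. \<forall>w' \<in> Om. f w w' > 0) \<and>
        (\<forall>w \<in> Om. \<forall>w' \<in> Om. f w w' = f w' w) \<and>
        (\<forall>A. A \<subseteq> Om \<longrightarrow>
           mu A = q_integral Om phi (\<lambda>w'. q_integral_on Om phi A (\<lambda>w. f w w'))))"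

end

theory Submission
  imports Defs
begin

(* Suppose mu A = \<integral>_A f d\<phi> with f > 0, and let m = mu(Om) = \<integral> f d\<phi>.
   The q-integral is positively homogeneous, \<integral> c*h d\<phi> = c * \<integral> h d\<phi> for c \<ge> 0,
   because the level set {c*h > \<lambda>} equals {h > \<lambda>/c} and the substitution
   \<lambda> = c*t rescales Lebesgue measure by c.  Hence the symmetric product kernel
   F(w,w') = f(w) f(w') / m satisfies
     \<integral>_A F(.,w') d\<phi> = f(w')/m * mu A   and then   \<integral> (f(w')/m * mu A) d\<phi>(w') = mu A. *)

lemma q_integral_cong:
  assumes "\<And>w. w \<in> Om \<Longrightarrow> h w = h' w"
  shows "q_integral Om phi h = q_integral Om phi h'"
proof -
  have "\<And>l. {w \<in> Om. h w > l} = {w \<in> Om. h' w > l}" using assms by auto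
  thus ?thesis unfolding q_integral_def by simp
qed

lemma q_integral_nonneg: "q_integral Om phi h \<ge> 0"
  unfolding q_integral_def set_lebesgue_integral_def
  by (rule Bochner_Integration.integral_nonneg) (simp add: indicator_def)

text \<open>For a coevent the zero function has q-integral 0: all its level sets
  above height 0 are empty, and a coevent vanishes on the empty event.\<close>

lemma q_integral_zero:
  assumes "coevent Om phi"
  shows "q_integral Om phi (\<lambda>w. 0) = 0"
proof -
  have "(LINT l:{0..}|lborel. (if phi {w \<in> Om. (0::real) > l} then 1 else 0))
       = (LINT l:{0::real..}|lborel. 0)"
    by (rule set_lebesgue_integral_cong) (use assms in \<open>auto simp: coevent_def\<close>)
  thus ?thesis unfolding q_integral_def by simp
qed

text \<open>Homogeneity for a strictly positive factor, via the affine change of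
  variables \<lambda> = c * t on the Lebesgue line.\<close>

lemma q_integral_scale_pos:
  assumes "c > 0"
  shows "q_integral Om phi (\<lambda>w. c * h w) = c * q_integral Om phi h"
proof -
  define G where "G = (\<lambda>l. if phi {w \<in> Om. h w > l} then 1 else (0::real))"
  define k where "k = (\<lambda>l. indicator {0..} l *\<^sub>R G (l / c))"
  have level_sets: "\<And>l. {w \<in> Om. c * h w > l} = {w \<in> Om. h w > l / c}"
    using assms by (auto simp: field_simps)
  have "q_integral Om phi (\<lambda>w. c * h w) = integral\<^sup>L lborel k"
    unfolding q_integral_def set_lebesgue_integral_def k_def G_def level_sets by simp
  also have "\<dots> = \<bar>c\<bar> *\<^sub>R integral\<^sup>L lborel (\<lambda>x. k (0 + c * x))"
    using assms by (intro lborel_integral_real_affine) auto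
  also have "(\<lambda>x. k (0 + c * x)) = (\<lambda>x. indicator {0..} x *\<^sub>R G x)"
    using assms by (auto simp: k_def indicator_def zero_le_mult_iff)
  also have "\<bar>c\<bar> *\<^sub>R integral\<^sup>L lborel (\<lambda>x. indicator {0..} x *\<^sub>R G x) = c * q_integral Om phi h"
    using assms unfolding q_integral_def set_lebesgue_integral_def G_def by simp
  finally show ?thesis .
qed

lemma q_integral_scale:
  assumes "c \<ge> 0" "coevent Om phi"
  shows "q_integral Om phi (\<lambda>w. c * h w) = c * q_integral Om phi h"
proof (cases "c = 0")
  case True thus ?thesis using q_integral_zero[OF assms(2)] by simp
next
  case False thus ?thesis using assms by (intro q_integral_scale_pos) auto
qed

lemma product_kernel_actualizes:
  assumes coev: "coevent Om phi"
    and fpos: "\<And>w. w \<in> Om \<Longrightarrow> f w > 0"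
    and gen: "\<And>A. A \<subseteq> Om \<Longrightarrow> mu A = q_integral_on Om phi A f"
    and mass: "mu Om \<noteq> 0"
  shows "actualizes Om mu phi"
proof -
  define m where "m = mu Om"
  have mu_nonneg: "\<And>A. A \<subseteq> Om \<Longrightarrow> mu A \<ge> 0"
    using gen q_integral_nonneg unfolding q_integral_on_def by metis
  have m_pos: "m > 0" using mu_nonneg[of Om] mass unfolding m_def by auto
  have m_integral: "m = q_integral Om phi f"
    unfolding m_def gen[OF order_refl] q_integral_on_def by (rule q_integral_cong) simp
  define F where "F = (\<lambda>w w'. f w * f w' / m)"
  show ?thesis unfolding actualizes_def
  proof (intro exI[of _ F] conjI ballI allI impI)
    fix w w' assume "w \<in> Om" "w' \<in> Om"
    thus "F w w' > 0" using fpos m_pos unfolding F_def by auto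
    show "F w w' = F w' w" unfolding F_def by simp
  next
    fix A assume A: "A \<subseteq> Om"
    have inner: "q_integral_on Om phi A (\<lambda>w. F w w') = mu A / m * f w'" if "w' \<in> Om" for w'
    proof -
      have "q_integral_on Om phi A (\<lambda>w. F w w')
          = q_integral Om phi (\<lambda>w. (f w' / m) * (f w * indicator A w))"
        unfolding q_integral_on_def F_def by (rule q_integral_cong) (simp add: field_simps)
      also have "\<dots> = f w' / m * q_integral_on Om phi A f"
        using that fpos[of w'] m_pos coev unfolding q_integral_on_def
        by (intro q_integral_scale) auto
      finally show ?thesis using gen[OF A] by simp
    qed
    have "q_integral Om phi (\<lambda>w'. q_integral_on Om phi A (\<lambda>w. F w w'))
        = q_integral Om phi (\<lambda>w'. mu A / m * f w')"
      by (rule q_integral_cong) (simp add: inner)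
    also have "\<dots> = mu A / m * q_integral Om phi f"
      using mu_nonneg[OF A] m_pos coev by (intro q_integral_scale) auto
    also have "\<dots> = mu A" using m_integral m_pos by simp
    finally show "mu A = q_integral Om phi (\<lambda>w'. q_integral_on Om phi A (\<lambda>w. F w w'))" by simp
  qed
qed

theorem theorem3p1:
  fixes Om :: "'a set" and phi :: "'a set \<Rightarrow> bool" and mu :: "'a set \<Rightarrow> real"
  assumes "finite Om" and "Om \<noteq> {}"
    and "coevent Om phi"
    and "q_measure Om mu"
    and "one_generates Om mu phi"
    and "mu Om \<noteq> 0"
  shows "actualizes Om mu phi"
proof -
  obtain f where "\<forall>w \<in> Om. f w > 0" and "\<And>A. A \<subseteq> Om \<Longrightarrow> mu A = q_integral_on Om phi A f"
    using assms(5) unfolding one_generates_def by blast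
  thus ?thesis using assms(3,6) by (intro product_kernel_actualizes) auto
qed

end
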